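(* Let $\mathbf{A}$ be a three-element Mal'cev algebra whose monolith $\mu$ is Abelian. Then $(0_A:\mu)=\mu$.
   Context: A Mal'cev algebra has a term $d$ with $d(y,x,x)\approx d(x,x,y)\approx y$. The monolith of $\mathbf{A}$ is the least congruence strictly above the equality relation $0_A$ (it is $1_A=A^2$ if $\mathbf{A}$ is simple). For congruences $\alpha,\beta$, $\alpha$ centralizes $\beta$ if the relation $\{(x,y,z,d(x,y,z)): x\,\alpha\,y\,\beta\,z\}$ is preserved by all operations of $\mathbf{A}$; $\alpha$ is Abelian if $\alpha$ centralizes $\alpha$; the centralizer $(0_A:\alpha)$ is the largest congruence $\delta$ such that $\alpha$ centralizes $\delta$. *)

theory Defs
  imports Main
begin

text \<open>An algebra is given by a carrier A :: 'a set and a set F of fundamental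
operations; each operation is a pair (n, f) where n is its arity and f acts on
argument lists of length n.\<close>

definition is_algebra :: "'a set \<Rightarrow> (nat \<times> ('a list \<Rightarrow> 'a)) set \<Rightarrow> bool" where
  "is_algebra A F \<longleftrightarrow> A \<noteq> {} \<and>
     (\<forall>(n, f) \<in> F. \<forall>xs. length xs = n \<and> set xs \<subseteq> A \<longrightarrow> f xs \<in> A)"

inductive_set term_ops :: "(nat \<times> ('a list \<Rightarrow> 'a)) set \<Rightarrow> (nat \<times> ('a list \<Rightarrow> 'a)) set"
  for F where
  proj: "i < n \<Longrightarrow> (n, \<lambda>xs. xs ! i) \<in> term_ops F"
| comp: "(m, f) \<in> F \<Longrightarrow> (\<forall>j<m. (n, g j) \<in> term_ops F) \<Longrightarrow>
         (n, \<lambda>xs. f (map (\<lambda>j. g j xs) [0..<m])) \<in> term_ops F"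

definition malcev_term :: "'a set \<Rightarrow> (nat \<times> ('a list \<Rightarrow> 'a)) set \<Rightarrow> ('a list \<Rightarrow> 'a) \<Rightarrow> bool" where
  "malcev_term A F d \<longleftrightarrow> (3, d) \<in> term_ops F \<and>
     (\<forall>x\<in>A. \<forall>y\<in>A. d [y, x, x] = y \<and> d [x, x, y] = y)"

definition congruence :: "'a set \<Rightarrow> (nat \<times> ('a list \<Rightarrow> 'a)) set \<Rightarrow> 'a rel \<Rightarrow> bool" where
  "congruence A F \<theta> \<longleftrightarrow> equiv A \<theta> \<and>
     (\<forall>(n, f) \<in> F. \<forall>xs ys. length xs = n \<and> length ys = n \<and>
        (\<forall>i<n. (xs ! i, ys ! i) \<in> \<theta>) \<longrightarrow> (f xs, f ys) \<in> \<theta>)"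

definition is_monolith :: "'a set \<Rightarrow> (nat \<times> ('a list \<Rightarrow> 'a)) set \<Rightarrow> 'a rel \<Rightarrow> bool" where
  "is_monolith A F \<mu> \<longleftrightarrow> congruence A F \<mu> \<and> \<mu> \<noteq> Id_on A \<and>
     (\<forall>\<theta>. congruence A F \<theta> \<and> \<theta> \<noteq> Id_on A \<longrightarrow> \<mu> \<subseteq> \<theta>)"

definition centr_rel :: "('a list \<Rightarrow> 'a) \<Rightarrow> 'a rel \<Rightarrow> 'a rel \<Rightarrow> ('a \<times> 'a \<times> 'a \<times> 'a) set" where
  "centr_rel d \<alpha> \<beta> = {(x, y, z, d [x, y, z]) | x y z. (x, y) \<in> \<alpha> \<and> (y, z) \<in> \<beta>}"

definition preserves :: "(nat \<times> ('a list \<Rightarrow> 'a)) \<Rightarrow> ('a \<times> 'a \<times> 'a \<times> 'a) set \<Rightarrow> bool" where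
  "preserves nf R \<longleftrightarrow> (case nf of (n, f) \<Rightarrow>
     (\<forall>t :: nat \<Rightarrow> 'a \<times> 'a \<times> 'a \<times> 'a. (\<forall>i<n. t i \<in> R) \<longrightarrow>
        (f (map (\<lambda>i. fst (t i)) [0..<n]),
         f (map (\<lambda>i. fst (snd (t i))) [0..<n]),
         f (map (\<lambda>i. fst (snd (snd (t i)))) [0..<n]),
         f (map (\<lambda>i. snd (snd (snd (t i)))) [0..<n])) \<in> R))"

definition centralizes :: "(nat \<times> ('a list \<Rightarrow> 'a)) set \<Rightarrow> ('a list \<Rightarrow> 'a) \<Rightarrow> 'a rel \<Rightarrow> 'a rel \<Rightarrow> bool" where
  "centralizes F d \<alpha> \<beta> \<longleftrightarrow> (\<forall>nf \<in> F. preserves nf (centr_rel d \<alpha> \<beta>))"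

definition abelian :: "(nat \<times> ('a list \<Rightarrow> 'a)) set \<Rightarrow> ('a list \<Rightarrow> 'a) \<Rightarrow> 'a rel \<Rightarrow> bool" where
  "abelian F d \<alpha> \<longleftrightarrow> centralizes F d \<alpha> \<alpha>"

definition is_centralizer :: "'a set \<Rightarrow> (nat \<times> ('a list \<Rightarrow> 'a)) set \<Rightarrow> ('a list \<Rightarrow> 'a) \<Rightarrow> 'a rel \<Rightarrow> 'a rel \<Rightarrow> bool" where
  "is_centralizer A F d \<alpha> \<delta> \<longleftrightarrow> congruence A F \<delta> \<and> centralizes F d \<alpha> \<delta> \<and>
     (\<forall>\<theta>. congruence A F \<theta> \<and> centralizes F d \<alpha> \<theta> \<longrightarrow> \<theta> \<subseteq> \<delta>)"

end

theory Submission
  imports Defs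
begin

text \<open>If \<theta> is a congruence centralized by \<mu> but not below \<mu>, then \<mu> \<subset> \<theta> by minimality,
so on three elements \<mu> has blocks {x, y} and {z} while z \<theta> y. The term condition
applied to (x, y, y, x), (y, y, y, y), (z, z, y, y) in the centralizing relation yields
(d(x, y, z), z, y, x) in it, i.e. x = d(e, z, y) with e \<mu> z. Then e = z and
x = d(z, z, y) = y, a contradiction.\<close>

definition coordinatewise ::
    "('a list \<Rightarrow> 'a) \<Rightarrow> nat \<Rightarrow> (nat \<Rightarrow> 'a \<times> 'a \<times> 'a \<times> 'a) \<Rightarrow> 'a \<times> 'a \<times> 'a \<times> 'a" where
  "coordinatewise f n t =
     (f (map (\<lambda>i. fst (t i)) [0..<n]), f (map (\<lambda>i. fst (snd (t i))) [0..<n]),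
      f (map (\<lambda>i. fst (snd (snd (t i)))) [0..<n]), f (map (\<lambda>i. snd (snd (snd (t i)))) [0..<n]))"

lemma preserves_iff_coordinatewise:
  "preserves (n, f) R \<longleftrightarrow> (\<forall>t. (\<forall>i<n. t i \<in> R) \<longrightarrow> coordinatewise f n t \<in> R)"
  by (simp add: preserves_def coordinatewise_def)

lemma coordinatewise_comp:
  "coordinatewise (\<lambda>xs. f (map (\<lambda>j. g j xs) [0..<m])) n t =
   coordinatewise f m (\<lambda>j. coordinatewise (g j) n t)"
  by (simp add: coordinatewise_def)

lemma preserves_term_ops:
  assumes "(n, f) \<in> term_ops F" and "\<forall>nf\<in>F. preserves nf R"
  shows "preserves (n, f) R"
  using assms(1)
proof induction
  case (proj i n)
  then show ?case
    by (auto simp: preserves_def)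
next
  case (comp m f n g)
  then have "preserves (m, f) R"
    using assms(2) by blast
  with comp.IH show ?case
    by (simp add: preserves_iff_coordinatewise coordinatewise_comp)
qed

lemma preserves_ternaryD:
  assumes "preserves (3, f) R"
    and "(x\<^sub>1, y\<^sub>1, z\<^sub>1, w\<^sub>1) \<in> R" "(x\<^sub>2, y\<^sub>2, z\<^sub>2, w\<^sub>2) \<in> R" "(x\<^sub>3, y\<^sub>3, z\<^sub>3, w\<^sub>3) \<in> R"
  shows "(f [x\<^sub>1, x\<^sub>2, x\<^sub>3], f [y\<^sub>1, y\<^sub>2, y\<^sub>3], f [z\<^sub>1, z\<^sub>2, z\<^sub>3], f [w\<^sub>1, w\<^sub>2, w\<^sub>3]) \<in> R"
proof -
  let ?t = "nth [(x\<^sub>1, y\<^sub>1, z\<^sub>1, w\<^sub>1), (x\<^sub>2, y\<^sub>2, z\<^sub>2, w\<^sub>2), (x\<^sub>3, y\<^sub>3, z\<^sub>3, w\<^sub>3)]"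
  have "\<forall>i<3. ?t i \<in> R"
    using assms(2-4) by (auto simp: less_Suc_eq numeral_3_eq_3)
  with assms(1) have "coordinatewise f 3 ?t \<in> R"
    by (simp add: preserves_iff_coordinatewise)
  then show ?thesis
    by (simp add: coordinatewise_def numeral_3_eq_3 upt_rec)
qed

lemma centralizes_singleton_class_eq:
  assumes d: "malcev_term A F d" and cen: "centralizes F d \<alpha> \<beta>"
    and \<alpha>: "equiv A \<alpha>" and \<beta>: "equiv A \<beta>"
    and ab: "(a, b) \<in> \<alpha>" and cb: "(c, b) \<in> \<beta>" and c: "\<alpha> `` {c} = {c}"
  shows "a = b"
proof -
  let ?R = "centr_rel d \<alpha> \<beta>"
  have "preserves (3, d) ?R"
    using d cen preserves_term_ops by (auto simp: malcev_term_def centralizes_def)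
  have A: "a \<in> A" "b \<in> A" "c \<in> A"
    using ab cb \<alpha> \<beta> by (auto dest: equiv_type)
  then have malcev: "d [a, b, b] = a" "d [b, b, b] = b" "d [c, c, b] = b" "d [b, b, c] = c"
    using d by (auto simp: malcev_term_def)
  have "(a, b, b, a) \<in> ?R" "(b, b, b, b) \<in> ?R" "(c, c, b, b) \<in> ?R"
    using A ab cb \<alpha> \<beta> malcev unfolding centr_rel_def by (auto elim!: equivE dest: refl_onD)
  then have "(d [a, b, c], c, b, a) \<in> ?R"
    using preserves_ternaryD[OF \<open>preserves (3, d) ?R\<close>] malcev by fastforce
  then obtain e where "(e, c) \<in> \<alpha>" and "a = d [e, c, b]"
    unfolding centr_rel_def by auto
  moreover from \<open>(e, c) \<in> \<alpha>\<close> have "e = c"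
    using c \<alpha> by (auto elim!: equivE dest: symD)
  ultimately show ?thesis
    using malcev by simp
qed


lemma card3_equiv_psubset:
  assumes A: "card A = 3" and \<mu>: "equiv A \<mu>" and \<theta>: "equiv A \<theta>"
    and "\<mu> \<noteq> Id_on A" and "\<mu> \<subset> \<theta>"
  obtains x y z where "(x, y) \<in> \<mu>" "x \<noteq> y" "(z, y) \<in> \<theta>" "\<mu> `` {z} = {z}"
proof -
  have "Id_on A \<subseteq> \<mu>" "\<mu> \<subseteq> A \<times> A"
    using \<mu> by (auto elim!: equivE dest: refl_onD)
  with \<open>\<mu> \<noteq> Id_on A\<close> obtain x y where xy: "(x, y) \<in> \<mu>" "x \<noteq> y"
    by auto
  from \<open>\<mu> \<subset> \<theta>\<close> obtain p q where pq: "(p, q) \<in> \<theta>" "(p, q) \<notin> \<mu>"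
    by auto
  have "x \<in> A" "y \<in> A" "p \<in> A" "q \<in> A"
    using xy pq \<mu> \<theta> by (auto dest: equiv_type)
  obtain z where z: "A = {x, y, z}" "z \<noteq> x" "z \<noteq> y"
  proof -
    have "finite A"
      using A by (intro card_ge_0_finite) simp
    then have "card (A - {x, y}) = 1"
      using A xy(2) \<open>x \<in> A\<close> \<open>y \<in> A\<close> by (simp add: card_Diff_subset)
    then obtain z where "A - {x, y} = {z}"
      by (auto simp: card_1_singleton_iff)
    with \<open>x \<in> A\<close> \<open>y \<in> A\<close> show thesis
      using that by blast
  qed
  have \<mu>_sym: "(u, v) \<in> \<mu> \<Longrightarrow> (v, u) \<in> \<mu>"
    and \<mu>_trans: "(u, v) \<in> \<mu> \<Longrightarrow> (v, w) \<in> \<mu> \<Longrightarrow> (u, w) \<in> \<mu>" for u v w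
    using \<mu> by (auto elim!: equivE dest: symD transD)
  have xy_class: "u \<in> {x, y} \<Longrightarrow> v \<in> {x, y} \<Longrightarrow> (u, v) \<in> \<mu>" for u v
    using xy \<open>Id_on A \<subseteq> \<mu>\<close> \<open>x \<in> A\<close> \<open>y \<in> A\<close> \<mu>_sym by blast
  have z_class: "\<mu> `` {z} = {z}"
  proof (rule ccontr)
    assume "\<mu> `` {z} \<noteq> {z}"
    then obtain u where "u \<in> {x, y}" "(z, u) \<in> \<mu>"
      using z \<open>Id_on A \<subseteq> \<mu>\<close> \<open>\<mu> \<subseteq> A \<times> A\<close> by blast
    then have "(v, x) \<in> \<mu>" if "v \<in> A" for v
      using that z xy_class \<mu>_trans by blast
    then have "(p, q) \<in> \<mu>"
      using \<open>p \<in> A\<close> \<open>q \<in> A\<close> \<mu>_sym \<mu>_trans by blast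
    with pq show False
      by simp
  qed
  have \<theta>_sym: "(u, v) \<in> \<theta> \<Longrightarrow> (v, u) \<in> \<theta>"
    and \<theta>_trans: "(u, v) \<in> \<theta> \<Longrightarrow> (v, w) \<in> \<theta> \<Longrightarrow> (u, w) \<in> \<theta>" for u v w
    using \<theta> by (auto elim!: equivE dest: symD transD)
  obtain w where "(z, w) \<in> \<theta>" "w \<in> {x, y}"
  proof -
    have "p \<noteq> q"
      using pq \<open>Id_on A \<subseteq> \<mu>\<close> \<open>p \<in> A\<close> by blast
    moreover have "z \<in> {p, q}"
      using pq xy_class z \<open>p \<in> A\<close> \<open>q \<in> A\<close> by blast
    ultimately show thesis
      using that pq z \<open>p \<in> A\<close> \<open>q \<in> A\<close> \<theta>_sym by blast
  qed
  moreover have "(w, y) \<in> \<theta>"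
    using \<open>w \<in> {x, y}\<close> xy_class \<open>\<mu> \<subset> \<theta>\<close> by blast
  ultimately have "(z, y) \<in> \<theta>"
    using \<theta>_trans by blast
  with xy z_class that show thesis
    by blast
qed

theorem lemma4p2:
  fixes A :: "'a set" and F :: "(nat \<times> ('a list \<Rightarrow> 'a)) set"
    and d :: "'a list \<Rightarrow> 'a" and \<mu> :: "'a rel"
  assumes "is_algebra A F"
    and "card A = 3"
    and "malcev_term A F d"
    and "is_monolith A F \<mu>"
    and "abelian F d \<mu>"
  shows "is_centralizer A F d \<mu> \<mu>"
proof -
  have \<mu>: "congruence A F \<mu>" "\<mu> \<noteq> Id_on A"
    and minimal: "\<And>\<theta>. congruence A F \<theta> \<Longrightarrow> \<theta> \<noteq> Id_on A \<Longrightarrow> \<mu> \<subseteq> \<theta>"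
    using assms(4) unfolding is_monolith_def by auto
  have "\<theta> \<subseteq> \<mu>" if \<theta>: "congruence A F \<theta>" "centralizes F d \<mu> \<theta>" for \<theta>
  proof (rule ccontr)
    assume "\<not> \<theta> \<subseteq> \<mu>"
    have equivs: "equiv A \<mu>" "equiv A \<theta>"
      using \<mu>(1) \<theta>(1) by (simp_all add: congruence_def)
    then have "Id_on A \<subseteq> \<mu>"
      by (auto elim!: equivE dest: refl_onD)
    with \<open>\<not> \<theta> \<subseteq> \<mu>\<close> have "\<mu> \<subset> \<theta>"
      using minimal[OF \<theta>(1)] by blast
    then obtain x y z where "(x, y) \<in> \<mu>" "x \<noteq> y" "(z, y) \<in> \<theta>" "\<mu> `` {z} = {z}"
      using card3_equiv_psubset[OF assms(2) equivs \<mu>(2)] by blast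
    then show False
      using centralizes_singleton_class_eq[OF assms(3) \<theta>(2) equivs] by blast
  qed
  with \<mu>(1) assms(5) show ?thesis
    unfolding is_centralizer_def abelian_def by blast
qed

end
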